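(* Let $a,b,c\ge 0$ and $r\ge 0$. The diversity-multiplexing tradeoff of the full-duplex $(a,b,c)$-relay channel, which in the high-SNR limit is given by $$d_{f.d.}(r)=\min\Big\{a+b+c-\alpha-\beta-\gamma \;:\; \min\big(\max(\alpha,\gamma),\max(\beta,\gamma)\big)\le r,\ 0\le\alpha\le a,\ 0\le\beta\le b,\ 0\le\gamma\le c\Big\},$$ equals $$d_{f.d.}(r)=\big(\min(a,b)-r\big)^{+}+(c-r)^{+},$$ where $x^+=\max(x,0)$.
   Context: The $(a,b,c)$-relay channel: a source $S$ communicates with a destination $D$ with the help of a relay $R$; the source signal is broadcast to $R$ and $D$, and the source and relay signals superpose at $D$. The channel gains $h_{sr},h_{rd},h_{sd}$ of the S-R, R-D, S-D links are i.i.d. circularly-symmetric complex Gaussian $\mathcal{CN}(0,1)$, quasi-static (constant over a codeword, independent across codewords), known only at the receivers (CSIR, no CSIT). The average SNRs of the S-R, R-D, S-D links are $\rho^a,\rho^b,\rho^c$ respectively, $a,b,c\ge 0$. A code family with rate $R$ and error probability $P_e$ achieves multiplexing gain $r=\lim_{\rho\to\infty} R/\log\rho$ and diversity $d=-\lim_{\rho\to\infty}\log P_e/\log\rho$; the DMT $d(r)$ is the supremum of achievable diversity at multiplexing gain $r$. The exponential orders are $\alpha=\lim_{\rho\to\infty}\frac{\log(1+|h_{sr}|^2\rho^a)}{\log\rho}$, and similarly $\beta,\gamma$ for $|h_{rd}|^2\rho^b$ and $|h_{sd}|^2\rho^c$. In the full-duplex case the relay can transmit and receive simultaneously, and (via a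 constant-gap capacity approximation) the outage event at multiplexing gain $r$ is $\{\min(\max(\alpha,\gamma),\max(\beta,\gamma))\le r\}$, which gives the optimization formula in the claim. *)

theory Defs
  imports Complex_Main
begin

definition pos_part :: "real \<Rightarrow> real" where
  "pos_part x = max x 0"

text \<open>Full-duplex DMT of the (a,b,c)-relay channel, defined as the optimum of the
  optimization problem (the minimum is attained; Inf coincides with it).\<close>
definition d_fd :: "real \<Rightarrow> real \<Rightarrow> real \<Rightarrow> real \<Rightarrow> real" where
  "d_fd a b c r = Inf {a + b + c - \<alpha> - \<beta> - \<gamma> | \<alpha> \<beta> \<gamma>.
      min (max \<alpha> \<gamma>) (max \<beta> \<gamma>) \<le> r \<and> 0 \<le> \<alpha> \<and> \<alpha> \<le> a \<and> 0 \<le> \<beta> \<and> \<beta> \<le> b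
      \<and> 0 \<le> \<gamma> \<and> \<gamma> \<le> c}"

end

theory Submission
  imports Defs
begin

text \<open>Outage requires \<gamma> \<le> r together with \<alpha> \<le> r or \<beta> \<le> r, so the cost
  a + b + c - \<alpha> - \<beta> - \<gamma> is at least the sum of the positive parts of min a b - r and c - r; the bound is attained by
  capping \<gamma> and the exponent of the weaker of the two links at r and leaving the other
  one at its maximum.\<close>

lemma fd_outage_cost_lower_bound:
  fixes a b c r \<alpha> \<beta> \<gamma> :: real
  assumes "0 \<le> r" "min (max \<alpha> \<gamma>) (max \<beta> \<gamma>) \<le> r"
    and "\<alpha> \<le> a" "\<beta> \<le> b" "0 \<le> \<gamma>" "\<gamma> \<le> c"
  shows "pos_part (min a b - r) + pos_part (c - r) \<le> a + b + c - \<alpha> - \<beta> - \<gamma>"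
proof -
  have "\<gamma> \<le> r" and "\<alpha> \<le> r \<or> \<beta> \<le> r"
    using assms(2) by (auto simp: min_def max_def split: if_splits)
  then show ?thesis
    using assms by (auto simp: pos_part_def min_def max_def)
qed

lemma fd_outage_cost_attained:
  fixes a b c r :: real
  assumes "0 \<le> a" "0 \<le> b" "0 \<le> c" "0 \<le> r"
  obtains \<alpha> \<beta> \<gamma> where "min (max \<alpha> \<gamma>) (max \<beta> \<gamma>) \<le> r"
    and "0 \<le> \<alpha>" "\<alpha> \<le> a" "0 \<le> \<beta>" "\<beta> \<le> b" "0 \<le> \<gamma>" "\<gamma> \<le> c"
    and "a + b + c - \<alpha> - \<beta> - \<gamma> = pos_part (min a b - r) + pos_part (c - r)"
proof
  let ?\<alpha> = "if a \<le> b then min a r else a"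
  let ?\<beta> = "if a \<le> b then b else min b r"
  let ?\<gamma> = "min c r"
  show "min (max ?\<alpha> ?\<gamma>) (max ?\<beta> ?\<gamma>) \<le> r"
    and "0 \<le> ?\<alpha>" "?\<alpha> \<le> a" "0 \<le> ?\<beta>" "?\<beta> \<le> b" "0 \<le> ?\<gamma>" "?\<gamma> \<le> c"
    and "a + b + c - ?\<alpha> - ?\<beta> - ?\<gamma> = pos_part (min a b - r) + pos_part (c - r)"
    using assms by (auto simp: pos_part_def min_def max_def)
qed

theorem lemma1:
  fixes a b c r :: real
  assumes "0 \<le> a" "0 \<le> b" "0 \<le> c" "0 \<le> r"
  shows "d_fd a b c r = pos_part (min a b - r) + pos_part (c - r)"
  unfolding d_fd_def
proof (rule cInf_eq_minimum)
  obtain \<alpha> \<beta> \<gamma> where "min (max \<alpha> \<gamma>) (max \<beta> \<gamma>) \<le> r"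
    and "0 \<le> \<alpha>" "\<alpha> \<le> a" "0 \<le> \<beta>" "\<beta> \<le> b" "0 \<le> \<gamma>" "\<gamma> \<le> c"
    and "a + b + c - \<alpha> - \<beta> - \<gamma> = pos_part (min a b - r) + pos_part (c - r)"
    using fd_outage_cost_attained assms .
  then show "pos_part (min a b - r) + pos_part (c - r) \<in> {a + b + c - \<alpha> - \<beta> - \<gamma> | \<alpha> \<beta> \<gamma>.
      min (max \<alpha> \<gamma>) (max \<beta> \<gamma>) \<le> r \<and> 0 \<le> \<alpha> \<and> \<alpha> \<le> a \<and> 0 \<le> \<beta> \<and> \<beta> \<le> b
      \<and> 0 \<le> \<gamma> \<and> \<gamma> \<le> c}"
    by (metis (mono_tags, lifting) mem_Collect_eq)
next
  fix x
  assume "x \<in> {a + b + c - \<alpha> - \<beta> - \<gamma> | \<alpha> \<beta> \<gamma>.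
      min (max \<alpha> \<gamma>) (max \<beta> \<gamma>) \<le> r \<and> 0 \<le> \<alpha> \<and> \<alpha> \<le> a \<and> 0 \<le> \<beta> \<and> \<beta> \<le> b
      \<and> 0 \<le> \<gamma> \<and> \<gamma> \<le> c}"
  then show "pos_part (min a b - r) + pos_part (c - r) \<le> x"
    using fd_outage_cost_lower_bound[OF \<open>0 \<le> r\<close>] by blast
qed

end
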